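(* Let $(Q,\cdot)$ be a quasigroup. Then $Q$ satisfies the identity $x(y(zx))=(x(yz))x$ for all $x,y,z\in Q$ if and only if $Q$ satisfies the identity $x(y(zz))=(x(yz))z$ for all $x,y,z\in Q$.
   Context: A quasigroup is a set $Q$ with a binary operation $\cdot$ (written as juxtaposition) such that for all $a,b\in Q$ each of the equations $ax=b$ and $ya=b$ has a unique solution in $Q$. *)

theory Defs
  imports Main
begin

definition quasigroup :: "'a set \<Rightarrow> ('a \<Rightarrow> 'a \<Rightarrow> 'a) \<Rightarrow> bool" where
  "quasigroup Q m \<longleftrightarrow>
     (\<forall>a\<in>Q. \<forall>b\<in>Q. m a b \<in> Q) \<and>
     (\<forall>a\<in>Q. \<forall>b\<in>Q. (\<exists>!x. x \<in> Q \<and> m a x = b) \<and> (\<exists>!y. y \<in> Q \<and> m y a = b))"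

end

theory Submission
  imports Defs "HOL-Algebra.Group"
begin

text \<open>Call \<open>x(y(zx)) = (x(yz))x\<close> identity A and \<open>x(y(zz)) = (x(yz))z\<close> identity B.
  Both are equivalent to \<open>(x(yz))w = x(y(zw))\<close>, which implies each of them by
  specialising \<open>w\<close>.
  Identity A gives \<open>y((y\<setminus>(ab))x) = a(bx)\<close> for every \<open>y\<close> after cancelling \<open>x\<close>;
  rewriting \<open>a(bc)\<close> and \<open>a(b(cd))\<close> in this way with \<open>y = d\<close>, the four-term law becomes an
  instance of A.
  Identity B forces a right unit \<open>f\<close> and makes \<open>x \<circ> y = x(f\<setminus>y)\<close> a group operation with
  unit \<open>f\<close>, in which \<open>xy = x \<circ> \<alpha> y\<close> for \<open>\<alpha> y = fy\<close>. Read in this group, B at \<open>x = f\<close>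
  says that \<alpha> is an involutive automorphism, and then both sides of the four-term law
  equal \<open>x \<circ> \<alpha> y \<circ> z \<circ> \<alpha> w\<close>.\<close>

lemma (in group) involutive_hom_if_isotope_identity_B:
  assumes closed: "\<And>x. x \<in> carrier G \<Longrightarrow> \<alpha> x \<in> carrier G"
    and inj: "inj_on \<alpha> (carrier G)"
    and one: "\<alpha> \<one> = \<one>"
    and identity_B: "\<And>y z. y \<in> carrier G \<Longrightarrow> z \<in> carrier G \<Longrightarrow>
      \<alpha> (y \<otimes> \<alpha> (z \<otimes> \<alpha> z)) = \<alpha> (y \<otimes> \<alpha> z) \<otimes> \<alpha> z"
    and x: "x \<in> carrier G" and y: "y \<in> carrier G"
  shows "\<alpha> (x \<otimes> y) = \<alpha> x \<otimes> \<alpha> y" and "\<alpha> (\<alpha> x) = x"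
proof -
  have square: "\<alpha> (z \<otimes> \<alpha> z) = \<alpha> z \<otimes> z" if z: "z \<in> carrier G" for z
  proof -
    have "\<alpha> (inv (\<alpha> z) \<otimes> \<alpha> (z \<otimes> \<alpha> z)) = \<alpha> z"
      using identity_B [of "inv (\<alpha> z)" z] z closed one by simp
    then have "inv (\<alpha> z) \<otimes> \<alpha> (z \<otimes> \<alpha> z) = z"
      using inj z closed by (simp add: inj_on_eq_iff)
    then show ?thesis
      using z closed by (simp add: inv_solve_left')
  qed
  have hom: "\<alpha> (u \<otimes> z) = \<alpha> u \<otimes> \<alpha> z" if uz: "u \<in> carrier G" "z \<in> carrier G" for u z
  proof -
    let ?y = "u \<otimes> inv (\<alpha> z)"
    have y: "?y \<in> carrier G" and "?y \<otimes> \<alpha> z = u"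
      using uz closed by (simp_all add: m_assoc)
    then have "?y \<otimes> \<alpha> (z \<otimes> \<alpha> z) = u \<otimes> z"
      using uz closed by (simp add: square m_assoc [symmetric])
    then show ?thesis
      using identity_B [OF y uz(2)] \<open>?y \<otimes> \<alpha> z = u\<close> by simp
  qed
  then show "\<alpha> (x \<otimes> y) = \<alpha> x \<otimes> \<alpha> y"
    using x y .
  have "\<alpha> x \<otimes> \<alpha> (\<alpha> x) = \<alpha> x \<otimes> x"
    using hom [of x "\<alpha> x"] square [of x] x closed by simp
  then show "\<alpha> (\<alpha> x) = x"
    using x closed by simp
qed

lemma (in group) isotope_assoc4_if_involutive_hom:
  assumes closed: "\<And>x. x \<in> carrier G \<Longrightarrow> \<alpha> x \<in> carrier G"
    and hom: "\<And>x y. x \<in> carrier G \<Longrightarrow> y \<in> carrier G \<Longrightarrow> \<alpha> (x \<otimes> y) = \<alpha> x \<otimes> \<alpha> y"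
    and involutive: "\<And>x. x \<in> carrier G \<Longrightarrow> \<alpha> (\<alpha> x) = x"
    and "a \<in> carrier G" "b \<in> carrier G" "c \<in> carrier G" "d \<in> carrier G"
  shows "(a \<otimes> \<alpha> (b \<otimes> \<alpha> c)) \<otimes> \<alpha> d = a \<otimes> \<alpha> (b \<otimes> \<alpha> (c \<otimes> \<alpha> d))"
  using assms by (simp add: m_assoc)

locale quasigroup_on =
  fixes Q :: "'a set" and mult :: "'a \<Rightarrow> 'a \<Rightarrow> 'a" (infixl "\<cdot>" 70)
  assumes quasigroup: "quasigroup Q (\<cdot>)"
begin

lemma mult_closed [intro, simp]: "x \<in> Q \<Longrightarrow> y \<in> Q \<Longrightarrow> x \<cdot> y \<in> Q"
  using quasigroup unfolding quasigroup_def by auto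

lemma left_solution: "x \<in> Q \<Longrightarrow> y \<in> Q \<Longrightarrow> \<exists>!z. z \<in> Q \<and> x \<cdot> z = y"
  using quasigroup unfolding quasigroup_def by auto

lemma right_solution: "x \<in> Q \<Longrightarrow> y \<in> Q \<Longrightarrow> \<exists>!z. z \<in> Q \<and> z \<cdot> x = y"
  using quasigroup unfolding quasigroup_def by auto

definition ldiv :: "'a \<Rightarrow> 'a \<Rightarrow> 'a" where
  "ldiv x y = (THE z. z \<in> Q \<and> x \<cdot> z = y)"

definition rdiv :: "'a \<Rightarrow> 'a \<Rightarrow> 'a" where
  "rdiv y x = (THE z. z \<in> Q \<and> z \<cdot> x = y)"

lemma ldiv_closed [intro, simp]: "x \<in> Q \<Longrightarrow> y \<in> Q \<Longrightarrow> ldiv x y \<in> Q"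
  and mult_ldiv [simp]: "x \<in> Q \<Longrightarrow> y \<in> Q \<Longrightarrow> x \<cdot> ldiv x y = y"
  unfolding ldiv_def by (auto dest: theI' [OF left_solution])

lemma rdiv_closed [intro, simp]: "x \<in> Q \<Longrightarrow> y \<in> Q \<Longrightarrow> rdiv y x \<in> Q"
  and rdiv_mult [simp]: "x \<in> Q \<Longrightarrow> y \<in> Q \<Longrightarrow> rdiv y x \<cdot> x = y"
  unfolding rdiv_def by (auto dest: theI' [OF right_solution])

lemma ldiv_mult [simp]: "x \<in> Q \<Longrightarrow> y \<in> Q \<Longrightarrow> ldiv x (x \<cdot> y) = y"
  unfolding ldiv_def by (rule the1_equality) (simp_all add: left_solution)

lemma mult_rdiv [simp]: "x \<in> Q \<Longrightarrow> y \<in> Q \<Longrightarrow> rdiv (y \<cdot> x) x = y"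
  unfolding rdiv_def by (rule the1_equality) (simp_all add: right_solution)

lemma left_cancel [simp]: "x \<in> Q \<Longrightarrow> y \<in> Q \<Longrightarrow> z \<in> Q \<Longrightarrow> x \<cdot> y = x \<cdot> z \<longleftrightarrow> y = z"
  by (metis ldiv_mult)

lemma right_cancel [simp]: "x \<in> Q \<Longrightarrow> y \<in> Q \<Longrightarrow> z \<in> Q \<Longrightarrow> y \<cdot> x = z \<cdot> x \<longleftrightarrow> y = z"
  by (metis mult_rdiv)

definition isotope :: "'a \<Rightarrow> 'a monoid" where
  "isotope f = \<lparr>carrier = Q, mult = (\<lambda>x y. x \<cdot> ldiv f y), one = f\<rparr>"

lemma isotope_simps [simp]:
  "carrier (isotope f) = Q" "x \<otimes>\<^bsub>isotope f\<^esub> y = x \<cdot> ldiv f y" "\<one>\<^bsub>isotope f\<^esub> = f"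
  by (simp_all add: isotope_def)

end

locale quasigroup_identity_A = quasigroup_on +
  assumes identity_A: "x \<in> Q \<Longrightarrow> y \<in> Q \<Longrightarrow> z \<in> Q \<Longrightarrow> x \<cdot> (y \<cdot> (z \<cdot> x)) = (x \<cdot> (y \<cdot> z)) \<cdot> x"
begin

lemma assoc4:
  assumes Q: "a \<in> Q" "b \<in> Q" "c \<in> Q" "d \<in> Q"
  shows "(a \<cdot> (b \<cdot> c)) \<cdot> d = a \<cdot> (b \<cdot> (c \<cdot> d))"
proof -
  have rebase: "y \<cdot> (ldiv y (a \<cdot> b) \<cdot> x) = a \<cdot> (b \<cdot> x)" if "x \<in> Q" "y \<in> Q" for x y
  proof -
    have "x \<cdot> (v \<cdot> (ldiv v (a \<cdot> b) \<cdot> x)) = (x \<cdot> (a \<cdot> b)) \<cdot> x" if "v \<in> Q" for v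
      using identity_A [of x v "ldiv v (a \<cdot> b)"] that \<open>x \<in> Q\<close> Q by simp
    from this [of y] this [of a] have "x \<cdot> (y \<cdot> (ldiv y (a \<cdot> b) \<cdot> x)) = x \<cdot> (a \<cdot> (b \<cdot> x))"
      using that Q by simp
    then show ?thesis
      using that Q by simp
  qed
  have "(a \<cdot> (b \<cdot> c)) \<cdot> d = (d \<cdot> (ldiv d (a \<cdot> b) \<cdot> c)) \<cdot> d"
    using rebase [of c d] Q by simp
  also have "\<dots> = d \<cdot> (ldiv d (a \<cdot> b) \<cdot> (c \<cdot> d))"
    using identity_A [of d "ldiv d (a \<cdot> b)" c] Q by simp
  also have "\<dots> = a \<cdot> (b \<cdot> (c \<cdot> d))"
    using rebase [of "c \<cdot> d" d] Q by simp
  finally show ?thesis .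
qed

end

locale quasigroup_identity_B = quasigroup_on +
  assumes identity_B: "x \<in> Q \<Longrightarrow> y \<in> Q \<Longrightarrow> z \<in> Q \<Longrightarrow> x \<cdot> (y \<cdot> (z \<cdot> z)) = (x \<cdot> (y \<cdot> z)) \<cdot> z"
begin

lemma right_unit_exists:
  assumes a: "a \<in> Q"
  obtains f where "f \<in> Q" and "\<And>x. x \<in> Q \<Longrightarrow> x \<cdot> f = x"
proof
  let ?f = "ldiv a a" and ?g = "rdiv (ldiv a a) a"
  have "a \<cdot> (?g \<cdot> (a \<cdot> a)) = a \<cdot> a"
    using identity_B [of a ?g a] a by simp
  then have g: "?g \<cdot> (a \<cdot> a) = a"
    using a by simp
  show "x \<cdot> ?f = x" if x: "x \<in> Q" for x
  proof -
    have "x \<cdot> a = (x \<cdot> ?f) \<cdot> a"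
      using identity_B [of x ?g a] g x a by simp
    then show ?thesis
      using x a by simp
  qed
qed (use a in simp)

lemma mult_mult_eq_ldiv:
  assumes "f \<in> Q" "x \<in> Q" "u \<in> Q" "z \<in> Q"
  shows "(x \<cdot> u) \<cdot> z = x \<cdot> ldiv f ((f \<cdot> u) \<cdot> z)"
proof -
  let ?v = "rdiv u z \<cdot> (z \<cdot> z)"
  have shift: "(y \<cdot> u) \<cdot> z = y \<cdot> ?v" if "y \<in> Q" for y
    using identity_B [of y "rdiv u z" z] that assms by simp
  then have "ldiv f ((f \<cdot> u) \<cdot> z) = ?v"
    using assms by simp
  with shift [OF \<open>x \<in> Q\<close>] show ?thesis
    by simp
qed

lemma group_isotope:
  assumes f: "f \<in> Q"
  shows "group (isotope f)"
proof (rule groupI)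
  show "(x \<otimes>\<^bsub>isotope f\<^esub> y) \<otimes>\<^bsub>isotope f\<^esub> z = x \<otimes>\<^bsub>isotope f\<^esub> (y \<otimes>\<^bsub>isotope f\<^esub> z)"
    if "x \<in> carrier (isotope f)" "y \<in> carrier (isotope f)" "z \<in> carrier (isotope f)" for x y z
    using mult_mult_eq_ldiv [of f x "ldiv f y" "ldiv f z"] that f by simp
  show "\<exists>y \<in> carrier (isotope f). y \<otimes>\<^bsub>isotope f\<^esub> x = \<one>\<^bsub>isotope f\<^esub>"
    if "x \<in> carrier (isotope f)" for x
    using that f by (intro bexI [of _ "rdiv f (ldiv f x)"]) simp_all
qed (use f in simp_all)

lemma assoc4:
  assumes Q: "a \<in> Q" "b \<in> Q" "c \<in> Q" "d \<in> Q"
  shows "(a \<cdot> (b \<cdot> c)) \<cdot> d = a \<cdot> (b \<cdot> (c \<cdot> d))"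
proof -
  obtain f where f: "f \<in> Q" and unit: "\<And>x. x \<in> Q \<Longrightarrow> x \<cdot> f = x"
    using right_unit_exists [OF Q(1)] by blast
  interpret G: group "isotope f"
    using group_isotope [OF f] .
  let ?\<alpha> = "(\<cdot>) f"
  have closed: "?\<alpha> x \<in> carrier (isotope f)" if "x \<in> carrier (isotope f)" for x
    using that f by simp
  have inj: "inj_on ?\<alpha> (carrier (isotope f))"
    using f by (simp add: inj_on_def)
  have one: "?\<alpha> \<one>\<^bsub>isotope f\<^esub> = \<one>\<^bsub>isotope f\<^esub>"
    using unit f by simp
  have identity_B': "?\<alpha> (y \<otimes>\<^bsub>isotope f\<^esub> ?\<alpha> (z \<otimes>\<^bsub>isotope f\<^esub> ?\<alpha> z)) =
      ?\<alpha> (y \<otimes>\<^bsub>isotope f\<^esub> ?\<alpha> z) \<otimes>\<^bsub>isotope f\<^esub> ?\<alpha> z"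
    if "y \<in> carrier (isotope f)" "z \<in> carrier (isotope f)" for y z
    using identity_B [of f y z] that f by simp
  note involutive_hom =
    G.involutive_hom_if_isotope_identity_B [where \<alpha> = "(\<cdot>) f", OF closed inj one identity_B']
  have "(a \<otimes>\<^bsub>isotope f\<^esub> ?\<alpha> (b \<otimes>\<^bsub>isotope f\<^esub> ?\<alpha> c)) \<otimes>\<^bsub>isotope f\<^esub> ?\<alpha> d =
      a \<otimes>\<^bsub>isotope f\<^esub> ?\<alpha> (b \<otimes>\<^bsub>isotope f\<^esub> ?\<alpha> (c \<otimes>\<^bsub>isotope f\<^esub> ?\<alpha> d))"
    using Q
    by (intro G.isotope_assoc4_if_involutive_hom [where \<alpha> = "(\<cdot>) f", OF closed involutive_hom])
      simp_all
  then show ?thesis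
    using Q f by simp
qed

end

theorem mainTheorem2:
  fixes Q :: "'a set" and m :: "'a \<Rightarrow> 'a \<Rightarrow> 'a"
  assumes "quasigroup Q m"
  shows "(\<forall>x\<in>Q. \<forall>y\<in>Q. \<forall>z\<in>Q. m x (m y (m z x)) = m (m x (m y z)) x)
     \<longleftrightarrow> (\<forall>x\<in>Q. \<forall>y\<in>Q. \<forall>z\<in>Q. m x (m y (m z z)) = m (m x (m y z)) z)"
proof
  assume "\<forall>x\<in>Q. \<forall>y\<in>Q. \<forall>z\<in>Q. m x (m y (m z x)) = m (m x (m y z)) x"
  with assms interpret quasigroup_identity_A Q m
    by unfold_locales simp_all
  show "\<forall>x\<in>Q. \<forall>y\<in>Q. \<forall>z\<in>Q. m x (m y (m z z)) = m (m x (m y z)) z"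
    by (simp add: assoc4)
next
  assume "\<forall>x\<in>Q. \<forall>y\<in>Q. \<forall>z\<in>Q. m x (m y (m z z)) = m (m x (m y z)) z"
  with assms interpret quasigroup_identity_B Q m
    by unfold_locales simp_all
  show "\<forall>x\<in>Q. \<forall>y\<in>Q. \<forall>z\<in>Q. m x (m y (m z x)) = m (m x (m y z)) x"
    by (simp add: assoc4)
qed

end
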